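(* Let $\mathcal{C}\subseteq 2^{[n]}$ and $\mathcal{D}\subseteq 2^{[m]}$ be nonempty codes, and let $\mathcal{C}\times\mathcal{D}=\{c\cup(d+n)\mid c\in\mathcal{C},d\in\mathcal{D}\}\subseteq 2^{[n+m]}$, where $d+n=\{j+n\mid j\in d\}$. Then $\mathcal{C}$ and $\mathcal{D}$ are both convex if and only if $\mathcal{C}\times\mathcal{D}$ is convex, and in that case $\mathrm{mindim}(\mathcal{C}\times\mathcal{D})\le\mathrm{mindim}(\mathcal{C})+\mathrm{mindim}(\mathcal{D})$.
   Context: A code is a subset $\mathcal{C}\subseteq 2^{[n]}$. Given $U_1,\dots,U_n\subseteq X$, $\mathrm{code}(\mathcal{U},X)=\{\sigma\subseteq[n]\mid \bigcap_{i\in\sigma}U_i\setminus\bigcup_{j\notin\sigma}U_j\neq\emptyset\}$ with the empty intersection equal to $X$. A code is convex if it equals $\mathrm{code}(\mathcal{U},X)$ for some open convex $X\subseteq\mathbb{R}^d$ and convex open $U_i\subseteq X$; $\mathrm{mindim}$ is the least such $d$. *)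

theory Defs
  imports "HOL-Analysis.Analysis"
begin

text \<open>Points of R^d are modelled as functions nat => real vanishing from index d on;
  the topology is the library's Euclidean_space d.\<close>

definition convex_fun_set :: "(nat \<Rightarrow> real) set \<Rightarrow> bool" where
  "convex_fun_set S \<longleftrightarrow>
     (\<forall>x\<in>S. \<forall>y\<in>S. \<forall>t::real. 0 \<le> t \<and> t \<le> 1 \<longrightarrow> (\<lambda>i. (1 - t) * x i + t * y i) \<in> S)"

definition code_of :: "nat \<Rightarrow> (nat \<Rightarrow> 'a set) \<Rightarrow> 'a set \<Rightarrow> nat set set" where
  "code_of n U X = {\<sigma>. \<sigma> \<subseteq> {1..n} \<and>
      (X \<inter> (\<Inter>i\<in>\<sigma>. U i)) - (\<Union>j\<in>{1..n} - \<sigma>. U j) \<noteq> {}}"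

definition convex_realizable :: "nat \<Rightarrow> nat \<Rightarrow> nat set set \<Rightarrow> bool" where
  "convex_realizable d n C \<longleftrightarrow>
     (\<exists>X U. openin (Euclidean_space d) X \<and> convex_fun_set X \<and>
        (\<forall>i\<in>{1..n}. openin (Euclidean_space d) (U i) \<and> convex_fun_set (U i) \<and> U i \<subseteq> X) \<and>
        C = code_of n U X)"

definition convex_code :: "nat \<Rightarrow> nat set set \<Rightarrow> bool" where
  "convex_code n C \<longleftrightarrow> (\<exists>d. convex_realizable d n C)"

definition mindim :: "nat \<Rightarrow> nat set set \<Rightarrow> nat" where
  "mindim n C = (LEAST d. convex_realizable d n C)"

definition code_prod :: "nat \<Rightarrow> nat set set \<Rightarrow> nat set set \<Rightarrow> nat set set" where
  "code_prod n C D = {c \<union> (\<lambda>j. j + n) ` d | c d. c \<in> C \<and> d \<in> D}"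

end

theory Submission imports Defs begin

text \<open>If U realizes C in R^d1 and V realizes D in R^d2, then the sets U_i \<times> Y and X \<times> V_j
  realize C \<times> D in R^(d1+d2) with ambient set X \<times> Y: the membership pattern of a point (x, y)
  is the pattern of x followed by the shifted pattern of y.  Conversely, a realization of
  C \<times> D restricted to the first n (resp. last m) sets realizes C (resp. D), since both codes
  are nonempty.\<close>

lemma code_of_eq_image: "code_of n U X = (\<lambda>x. {i\<in>{1..n}. x \<in> U i}) ` X"
proof
  show "code_of n U X \<subseteq> (\<lambda>x. {i\<in>{1..n}. x \<in> U i}) ` X"
  proof
    fix s assume "s \<in> code_of n U X"
    then obtain x where "s \<subseteq> {1..n}" "x \<in> X" "\<forall>i\<in>s. x \<in> U i" "\<forall>j\<in>{1..n} - s. x \<notin> U j"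
      unfolding code_of_def by blast
    then show "s \<in> (\<lambda>x. {i\<in>{1..n}. x \<in> U i}) ` X"
      by (intro image_eqI[of _ _ x]) blast+
  qed
qed (auto simp: code_of_def)

lemma code_of_reindex:
  assumes "f ` {1..m} \<subseteq> {1..N}"
  shows "code_of m (\<lambda>j. U (f j)) X = (\<lambda>s. {j\<in>{1..m}. f j \<in> s}) ` code_of N U X"
  unfolding code_of_eq_image image_image using assms by (intro image_cong) (auto simp: image_subset_iff)

lemma convex_realizable_reindex:
  assumes "convex_realizable d N K" and "f ` {1..m} \<subseteq> {1..N}"
  shows "convex_realizable d m ((\<lambda>s. {j\<in>{1..m}. f j \<in> s}) ` K)"
proof -
  obtain X U where X: "openin (Euclidean_space d) X" "convex_fun_set X"
    and U: "\<forall>i\<in>{1..N}. openin (Euclidean_space d) (U i) \<and> convex_fun_set (U i) \<and> U i \<subseteq> X"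
    and K: "K = code_of N U X"
    using assms(1) unfolding convex_realizable_def by blast
  have "\<forall>j\<in>{1..m}. openin (Euclidean_space d) (U (f j)) \<and> convex_fun_set (U (f j)) \<and> U (f j) \<subseteq> X"
    using U assms(2) by blast
  with X show ?thesis
    unfolding convex_realizable_def K code_of_reindex[OF assms(2), symmetric]
    by (intro exI[of _ X] exI[of _ "\<lambda>j. U (f j)"]) simp
qed

lemma code_prod_eq_image: "code_prod n C D = (\<lambda>(c, d). c \<union> (\<lambda>j. j + n) ` d) ` (C \<times> D)"
  unfolding code_prod_def by auto

lemma code_prod_proj_fst:
  assumes "C \<subseteq> Pow {1..n}" and "D \<subseteq> Pow {1..m}" and "D \<noteq> {}"
  shows "(\<lambda>s. {j\<in>{1..n}. j \<in> s}) ` code_prod n C D = C"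
proof -
  have slice: "{j\<in>{1..n}. j \<in> (case p of (c, d) \<Rightarrow> c \<union> (\<lambda>j. j + n) ` d)} = fst p"
    if "p \<in> C \<times> D" for p
  proof -
    from that obtain c d where "p = (c, d)" "c \<in> C" "d \<in> D" by blast
    moreover from this assms(1,2) have "c \<subseteq> {1..n}" "d \<subseteq> {1..m}" by auto
    ultimately show ?thesis by auto
  qed
  have "(\<lambda>s. {j\<in>{1..n}. j \<in> s}) ` code_prod n C D = fst ` (C \<times> D)"
    unfolding code_prod_eq_image image_image by (rule image_cong[OF refl slice])
  with assms(3) show ?thesis by simp
qed

lemma code_prod_proj_snd:
  assumes "C \<subseteq> Pow {1..n}" and "D \<subseteq> Pow {1..m}" and "C \<noteq> {}"
  shows "(\<lambda>s. {j\<in>{1..m}. j + n \<in> s}) ` code_prod n C D = D"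
proof -
  have slice: "{j\<in>{1..m}. j + n \<in> (case p of (c, d) \<Rightarrow> c \<union> (\<lambda>j. j + n) ` d)} = snd p"
    if "p \<in> C \<times> D" for p
  proof -
    from that obtain c d where "p = (c, d)" "c \<in> C" "d \<in> D" by blast
    moreover from this assms(1,2) have "c \<subseteq> {1..n}" "d \<subseteq> {1..m}" by auto
    ultimately show ?thesis by auto
  qed
  have "(\<lambda>s. {j\<in>{1..m}. j + n \<in> s}) ` code_prod n C D = snd ` (C \<times> D)"
    unfolding code_prod_eq_image image_image by (rule image_cong[OF refl slice])
  with assms(3) show ?thesis by simp
qed

definition low_block :: "nat \<Rightarrow> (nat \<Rightarrow> real) \<Rightarrow> nat \<Rightarrow> real" where
  "low_block d z = (\<lambda>i. if i < d then z i else 0)"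

definition high_block :: "nat \<Rightarrow> nat \<Rightarrow> (nat \<Rightarrow> real) \<Rightarrow> nat \<Rightarrow> real" where
  "high_block k d z = (\<lambda>i. if i < d then z (i + k) else 0)"

definition block_prod :: "nat \<Rightarrow> nat \<Rightarrow> (nat \<Rightarrow> real) set \<Rightarrow> (nat \<Rightarrow> real) set \<Rightarrow> (nat \<Rightarrow> real) set" where
  "block_prod d1 d2 S T = {z\<in>topspace (Euclidean_space (d1 + d2)).
     low_block d1 z \<in> S \<and> high_block d1 d2 z \<in> T}"

lemma continuous_map_Euclidean_space_component:
  "continuous_map (Euclidean_space d) euclideanreal (\<lambda>z. z k)"
  unfolding Euclidean_space_def
  by (rule continuous_map_from_subtopology)
     (use continuous_map_product_projection[of k UNIV "\<lambda>_. euclideanreal"] in simp)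

lemma continuous_map_low_block:
  "continuous_map (Euclidean_space e) (Euclidean_space d) (low_block d)"
  unfolding low_block_def
  using continuous_map_componentwise_Euclidean_space[of "Euclidean_space e" d "\<lambda>z. z"]
    continuous_map_Euclidean_space_component by blast

lemma continuous_map_high_block:
  "continuous_map (Euclidean_space e) (Euclidean_space d) (high_block k d)"
  unfolding high_block_def
  using continuous_map_componentwise_Euclidean_space[of "Euclidean_space e" d "\<lambda>z i. z (i + k)"]
    continuous_map_Euclidean_space_component by blast

lemma openin_block_prod:
  assumes "openin (Euclidean_space d1) S" and "openin (Euclidean_space d2) T"
  shows "openin (Euclidean_space (d1 + d2)) (block_prod d1 d2 S T)"
proof -
  have "block_prod d1 d2 S T =
      {z\<in>topspace (Euclidean_space (d1 + d2)). low_block d1 z \<in> S} \<inter>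
      {z\<in>topspace (Euclidean_space (d1 + d2)). high_block d1 d2 z \<in> T}"
    unfolding block_prod_def by blast
  then show ?thesis
    by (simp add: openin_Int openin_continuous_map_preimage[OF continuous_map_low_block assms(1)]
        openin_continuous_map_preimage[OF continuous_map_high_block assms(2)])
qed

lemma convex_fun_set_block_prod:
  assumes "convex_fun_set S" and "convex_fun_set T"
  shows "convex_fun_set (block_prod d1 d2 S T)"
  unfolding convex_fun_set_def
proof (intro ballI allI impI)
  fix x y and t :: real
  assume x: "x \<in> block_prod d1 d2 S T" and y: "y \<in> block_prod d1 d2 S T" and t: "0 \<le> t \<and> t \<le> 1"
  let ?w = "\<lambda>i. (1 - t) * x i + t * y i"
  have "?w \<in> topspace (Euclidean_space (d1 + d2))"
    using x y by (simp add: block_prod_def topspace_Euclidean_space)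
  moreover have "low_block d1 ?w = (\<lambda>i. (1 - t) * low_block d1 x i + t * low_block d1 y i)"
    and "high_block d1 d2 ?w = (\<lambda>i. (1 - t) * high_block d1 d2 x i + t * high_block d1 d2 y i)"
    by (auto simp: low_block_def high_block_def)
  ultimately show "?w \<in> block_prod d1 d2 S T"
    using x y t assms unfolding block_prod_def convex_fun_set_def by auto
qed

lemma block_prod_mono: "S \<subseteq> S' \<Longrightarrow> T \<subseteq> T' \<Longrightarrow> block_prod d1 d2 S T \<subseteq> block_prod d1 d2 S' T'"
  unfolding block_prod_def by blast

lemma image_block_prod:
  assumes "S \<subseteq> topspace (Euclidean_space d1)" and "T \<subseteq> topspace (Euclidean_space d2)"
  shows "(\<lambda>z. (low_block d1 z, high_block d1 d2 z)) ` block_prod d1 d2 S T = S \<times> T"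
proof
  show "(\<lambda>z. (low_block d1 z, high_block d1 d2 z)) ` block_prod d1 d2 S T \<subseteq> S \<times> T"
    unfolding block_prod_def by blast
next
  show "S \<times> T \<subseteq> (\<lambda>z. (low_block d1 z, high_block d1 d2 z)) ` block_prod d1 d2 S T"
  proof clarify
    fix x y assume xy: "x \<in> S" "y \<in> T"
    then have x0: "\<forall>i\<ge>d1. x i = 0" and y0: "\<forall>i\<ge>d2. y i = 0"
      using assms by (auto simp: topspace_Euclidean_space)
    define w where "w = (\<lambda>i. if i < d1 then x i else y (i - d1))"
    have "low_block d1 w = x" "high_block d1 d2 w = y"
      using x0 y0 by (auto simp: low_block_def high_block_def w_def)
    moreover have "w \<in> topspace (Euclidean_space (d1 + d2))"
      using y0 by (auto simp: topspace_Euclidean_space w_def)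
    ultimately show "(x, y) \<in> (\<lambda>z. (low_block d1 z, high_block d1 d2 z)) ` block_prod d1 d2 S T"
      using xy unfolding block_prod_def by (intro image_eqI[of _ _ w]) auto
  qed
qed

lemma code_of_block_prod:
  assumes "X \<subseteq> topspace (Euclidean_space d1)" and "Y \<subseteq> topspace (Euclidean_space d2)"
  shows "code_of (n + m)
      (\<lambda>k. if k \<le> n then block_prod d1 d2 (U k) Y else block_prod d1 d2 X (V (k - n)))
      (block_prod d1 d2 X Y)
    = code_prod n (code_of n U X) (code_of m V Y)"
    (is "code_of _ ?W ?Z = _")
proof -
  define pattern where "pattern x y =
    {i\<in>{1..n}. x \<in> U i} \<union> (\<lambda>j. j + n) ` {j\<in>{1..m}. y \<in> V j}" for x y
  have "{k\<in>{1..n + m}. z \<in> ?W k} = pattern (low_block d1 z) (high_block d1 d2 z)"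
    if "z \<in> ?Z" for z
  proof -
    have "k \<in> (\<lambda>j. j + n) ` A \<longleftrightarrow> n \<le> k \<and> k - n \<in> A" for k A
      by (auto simp: image_iff) (metis le_add_diff_inverse2)
    with \<open>z \<in> ?Z\<close> show ?thesis
      unfolding pattern_def block_prod_def by (auto simp: not_le)
  qed
  then have "code_of (n + m) ?W ?Z = (\<lambda>z. pattern (low_block d1 z) (high_block d1 d2 z)) ` ?Z"
    unfolding code_of_eq_image by (rule image_cong[OF refl])
  also have "\<dots> = case_prod pattern ` ((\<lambda>z. (low_block d1 z, high_block d1 d2 z)) ` ?Z)"
    by (simp add: image_image)
  also have "\<dots> = case_prod pattern ` (X \<times> Y)"
    by (simp only: image_block_prod[OF assms])
  also have "\<dots> = code_prod n (code_of n U X) (code_of m V Y)"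
    unfolding code_of_eq_image code_prod_eq_image pattern_def by auto
  finally show ?thesis .
qed

lemma convex_realizable_code_prod:
  assumes "convex_realizable d1 n C" and "convex_realizable d2 m D"
  shows "convex_realizable (d1 + d2) (n + m) (code_prod n C D)"
proof -
  obtain X U where X: "openin (Euclidean_space d1) X" "convex_fun_set X"
    and U: "\<forall>i\<in>{1..n}. openin (Euclidean_space d1) (U i) \<and> convex_fun_set (U i) \<and> U i \<subseteq> X"
    and C: "C = code_of n U X"
    using assms(1) unfolding convex_realizable_def by blast
  obtain Y V where Y: "openin (Euclidean_space d2) Y" "convex_fun_set Y"
    and V: "\<forall>j\<in>{1..m}. openin (Euclidean_space d2) (V j) \<and> convex_fun_set (V j) \<and> V j \<subseteq> Y"
    and D: "D = code_of m V Y"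
    using assms(2) unfolding convex_realizable_def by blast
  define Z where "Z = block_prod d1 d2 X Y"
  define W where "W k = (if k \<le> n then block_prod d1 d2 (U k) Y else block_prod d1 d2 X (V (k - n)))" for k
  have Z: "openin (Euclidean_space (d1 + d2)) Z" "convex_fun_set Z"
    unfolding Z_def using X Y by (auto intro: openin_block_prod convex_fun_set_block_prod)
  have W: "openin (Euclidean_space (d1 + d2)) (W k) \<and> convex_fun_set (W k) \<and> W k \<subseteq> Z"
    if "k \<in> {1..n + m}" for k
  proof (cases "k \<le> n")
    case True
    with that U have "openin (Euclidean_space d1) (U k)" "convex_fun_set (U k)" "U k \<subseteq> X"
      by auto
    with True Y show ?thesis unfolding W_def Z_def
      by (simp add: openin_block_prod convex_fun_set_block_prod block_prod_mono)
  next
    case False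
    with that have "k - n \<in> {1..m}" by auto
    with V have "openin (Euclidean_space d2) (V (k - n))" "convex_fun_set (V (k - n))"
      "V (k - n) \<subseteq> Y"
      by auto
    with False X show ?thesis unfolding W_def Z_def
      by (simp add: openin_block_prod convex_fun_set_block_prod block_prod_mono)
  qed
  have "code_prod n C D = code_of (n + m) W Z"
    unfolding C D W_def Z_def using openin_subset[OF X(1)] openin_subset[OF Y(1)]
    by (rule code_of_block_prod[symmetric])
  with Z W show ?thesis
    unfolding convex_realizable_def by (intro exI[of _ Z] exI[of _ W]) simp
qed

lemma convex_realizable_mindim: "convex_code n C \<Longrightarrow> convex_realizable (mindim n C) n C"
  unfolding convex_code_def mindim_def by (rule LeastI_ex)

lemma mindim_le: "convex_realizable d n C \<Longrightarrow> mindim n C \<le> d"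
  unfolding mindim_def by (rule Least_le)

theorem theorem4p3:
  fixes n m :: nat and C D :: "nat set set"
  assumes "C \<subseteq> Pow {1..n}" and "D \<subseteq> Pow {1..m}"
    and "C \<noteq> {}" and "D \<noteq> {}"
  shows "(convex_code n C \<and> convex_code m D \<longleftrightarrow> convex_code (n + m) (code_prod n C D))
         \<and> (convex_code n C \<and> convex_code m D \<longrightarrow>
              mindim (n + m) (code_prod n C D) \<le> mindim n C + mindim m D)"
proof (rule conjI[OF iffI impI])
  assume "convex_code n C \<and> convex_code m D"
  then have product: "convex_realizable (mindim n C + mindim m D) (n + m) (code_prod n C D)"
    by (blast intro: convex_realizable_code_prod convex_realizable_mindim)
  then show "convex_code (n + m) (code_prod n C D)"
    unfolding convex_code_def by blast
  from product show "mindim (n + m) (code_prod n C D) \<le> mindim n C + mindim m D"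
    by (rule mindim_le)
next
  assume "convex_code (n + m) (code_prod n C D)"
  then obtain d where d: "convex_realizable d (n + m) (code_prod n C D)"
    unfolding convex_code_def by blast
  have "convex_realizable d n C"
    using convex_realizable_reindex[OF d, of "\<lambda>j. j" n] code_prod_proj_fst[OF assms(1,2,4)] by auto
  moreover have "convex_realizable d m D"
    using convex_realizable_reindex[OF d, of "\<lambda>j. j + n" m] code_prod_proj_snd[OF assms(1,2,3)]
    by auto
  ultimately show "convex_code n C \<and> convex_code m D"
    unfolding convex_code_def by blast
qed

end
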